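(* Let $\partial$ and $\partial'$ be $(A,B)$-equivalent $M_{A,B}$-differentials. Then the set of all $\partial$-trivial elements coincides with the set of all $\partial'$-trivial elements.
   Context: $\mathbb E$ is a field. $A=\{a_1\prec\dots\prec a_N\}$ is a finite linearly ordered set with a grading $\deg:A\to\mathbb Z$; $\mathbb E(A)$ is the graded vector space with basis $A$. An $M$-differential is a linear map $\partial:\mathbb E(A)\to\mathbb E(A)$ of degree $-1$ with $\partial^2=0$ and $\partial(a_i)\in\mathrm{span}\{a_1,\dots,a_{i-1}\}$ for all $i$. For $B\subset A$ with $\partial(\mathbb E(B))\subset\mathbb E(B)$, $\partial$ is called an $M_{A,B}$-differential. $\mathrm{Aut}_T(A,B)$ is the group of graded linear automorphisms $g$ of $\mathbb E(A)$ preserving each subspace $\mathrm{span}\{a_1,\dots,a_i\}$ and with $g(\mathbb E(B))=\mathbb E(B)$. Two $M_{A,B}$-differentials are $(A,B)$-equivalent if $\partial_2=g\partial_1g^{-1}$ for some $g\in\mathrm{Aut}_T(A,B)$. An element $a_k\in B$ is $\partial$-trivial if $k<N$, $a_{k+1}\in A\setminus B$, and $a_k$ appears with nonzero coefficient in the expansion of $\partial(a_{k+1})$ in the basis $A$. *)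

theory Defs
  imports "Jordan_Normal_Form.Matrix"
begin

(* Conventions: A = {a_1 < ... < a_N} is encoded by the indices 0..<N (index i
   stands for a_(i+1)); the grading is deg :: nat => int (only values on 0..<N
   matter); B is a set of indices, B \<subseteq> {0..<N}.
   E(A) = carrier_vec N, a vector v has coordinate v$i at basis element i.
   A linear map of E(A) is its N x N matrix M w.r.t. the basis A:
   M $$ (i,j) = coefficient of basis element i in M(basis element j). *)

definition EB :: "nat \<Rightarrow> nat set \<Rightarrow> 'k::field vec set" where
  "EB N B = {v \<in> carrier_vec N. \<forall>i<N. i \<notin> B \<longrightarrow> v $ i = 0}"

(* span{a_1,...,a_i} = vectors supported on the indices 0..<i *)
definition flag_sub :: "nat \<Rightarrow> nat \<Rightarrow> 'k::field vec set" where
  "flag_sub N i = {v \<in> carrier_vec N. \<forall>k<N. i \<le> k \<longrightarrow> v $ k = 0}"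

definition M_differential :: "nat \<Rightarrow> (nat \<Rightarrow> int) \<Rightarrow> 'k::field mat \<Rightarrow> bool" where
  "M_differential N deg D \<longleftrightarrow>
     D \<in> carrier_mat N N \<and>
     (\<forall>i<N. \<forall>j<N. D $$ (i,j) \<noteq> 0 \<longrightarrow> deg i = deg j - 1) \<and>
     D * D = 0\<^sub>m N N \<and>
     (\<forall>i<N. \<forall>j<N. D $$ (i,j) \<noteq> 0 \<longrightarrow> i < j)"

definition MAB_differential ::
  "nat \<Rightarrow> (nat \<Rightarrow> int) \<Rightarrow> nat set \<Rightarrow> 'k::field mat \<Rightarrow> bool" where
  "MAB_differential N deg B D \<longleftrightarrow>
     M_differential N deg D \<and> (\<forall>v \<in> EB N B. D *\<^sub>v v \<in> EB N B)"

definition AutT :: "nat \<Rightarrow> (nat \<Rightarrow> int) \<Rightarrow> nat set \<Rightarrow> 'k::field mat set" where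
  "AutT N deg B = {g. g \<in> carrier_mat N N \<and> invertible_mat g \<and>
     (\<forall>i<N. \<forall>j<N. g $$ (i,j) \<noteq> 0 \<longrightarrow> deg i = deg j) \<and>
     (\<forall>i\<le>N. (\<lambda>v. g *\<^sub>v v) ` flag_sub N i = flag_sub N i) \<and>
     (\<lambda>v. g *\<^sub>v v) ` EB N B = EB N B}"

definition AB_equivalent ::
  "nat \<Rightarrow> (nat \<Rightarrow> int) \<Rightarrow> nat set \<Rightarrow> 'k::field mat \<Rightarrow> 'k mat \<Rightarrow> bool" where
  "AB_equivalent N deg B D1 D2 \<longleftrightarrow>
     (\<exists>g \<in> AutT N deg B. \<exists>h \<in> carrier_mat N N.
        g * h = 1\<^sub>m N \<and> h * g = 1\<^sub>m N \<and> D2 = g * D1 * h)"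

definition trivial_elems :: "nat \<Rightarrow> nat set \<Rightarrow> 'k::field mat \<Rightarrow> nat set" where
  "trivial_elems N B D = {k \<in> B. k + 1 < N \<and> k + 1 \<notin> B \<and> D $$ (k, k+1) \<noteq> 0}"

end

theory Submission
  imports Defs "Jordan_Normal_Form.Determinant"
begin

text \<open>An element g of Aut_T(A,B) preserves the flag, so it is upper triangular with nonzero
  diagonal, while M-differentials are strictly upper triangular. Comparing the entries at
  (k, k+1) of the two sides of D2 g = g D1 gives D2(k,k+1) g(k+1,k+1) = g(k,k) D1(k,k+1),
  so D1 and D2 have the same nonzero superdiagonal entries.\<close>

definition strictly_upper_triangular :: "'a::zero mat \<Rightarrow> bool" where
  "strictly_upper_triangular A \<longleftrightarrow> (\<forall>i < dim_row A. \<forall>j \<le> i. A $$ (i,j) = 0)"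

lemma strictly_upper_triangular_imp_upper_triangular:
  "strictly_upper_triangular A \<Longrightarrow> upper_triangular A"
  unfolding strictly_upper_triangular_def upper_triangular_def by simp

lemma strictly_upper_triangular_diag:
  "strictly_upper_triangular A \<Longrightarrow> i < dim_row A \<Longrightarrow> A $$ (i,i) = 0"
  unfolding strictly_upper_triangular_def by simp

lemma M_differential_strictly_upper_triangular:
  assumes "M_differential N deg D"
  shows "strictly_upper_triangular D"
proof -
  have "D \<in> carrier_mat N N"
    and "\<And>i j. i < N \<Longrightarrow> j < N \<Longrightarrow> D $$ (i,j) \<noteq> 0 \<Longrightarrow> i < j"
    using assms unfolding M_differential_def by auto
  then show ?thesis
    unfolding strictly_upper_triangular_def by (metis carrier_matD(1) le_less_trans not_le)
qed

lemma flag_preserving_imp_upper_triangular: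
  fixes A :: "'a::field mat"
  assumes A: "A \<in> carrier_mat n n"
    and flag: "\<forall>i\<le>n. (\<lambda>v. A *\<^sub>v v) ` flag_sub n i \<subseteq> flag_sub n i"
  shows "upper_triangular A"
proof
  fix i j assume ji: "j < i" and "i < dim_row A"
  then have i: "i < n" and j: "j < n"
    using A by auto
  have "unit_vec n j \<in> flag_sub n (Suc j)"
    unfolding flag_sub_def by (simp add: unit_vec_def)
  then have "A *\<^sub>v unit_vec n j \<in> flag_sub n (Suc j)"
    using flag j by (metis Suc_leI image_subset_iff)
  then have "(A *\<^sub>v unit_vec n j) $ i = 0"
    using i ji unfolding flag_sub_def by simp
  then show "A $$ (i,j) = 0"
    using A i j by simp
qed

lemma upper_triangular_right_invertible_diag_nonzero:
  fixes A :: "'a::field mat"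
  assumes A: "A \<in> carrier_mat n n" and B: "B \<in> carrier_mat n n"
    and AB: "A * B = 1\<^sub>m n" and ut: "upper_triangular A" and i: "i < n"
  shows "A $$ (i,i) \<noteq> 0"
proof -
  have "det A * det B = 1"
    using det_mult[OF A B] AB by simp
  then have "(\<Prod>i = 0..<n. A $$ (i,i)) \<noteq> 0"
    using det_upper_triangular[OF ut A] prod_list_diag_prod[of A] A by fastforce
  then show ?thesis
    using i by (simp add: prod_zero_iff)
qed

lemma upper_triangular_mult_index:
  fixes A B :: "'a::comm_ring_1 mat"
  assumes "A \<in> carrier_mat n n" and "B \<in> carrier_mat n n"
    and "upper_triangular A" and "upper_triangular B" and "i \<le> j" and "j < n"
  shows "(A * B) $$ (i,j) = (\<Sum>l = i..j. A $$ (i,l) * B $$ (l,j))"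
proof -
  have "(A * B) $$ (i,j) = (\<Sum>l = 0..<n. A $$ (i,l) * B $$ (l,j))"
    using assms by (simp add: scalar_prod_def)
  also have "\<dots> = (\<Sum>l = i..j. A $$ (i,l) * B $$ (l,j))"
    using assms by (intro sum.mono_neutral_right) (auto simp: not_le upper_triangularD)
  finally show ?thesis .
qed

lemma upper_triangular_mult_superdiag:
  fixes A B :: "'a::comm_ring_1 mat"
  assumes "A \<in> carrier_mat n n" and "B \<in> carrier_mat n n"
    and "upper_triangular A" and "upper_triangular B" and "k + 1 < n"
  shows "(A * B) $$ (k, k+1) = A $$ (k,k) * B $$ (k, k+1) + A $$ (k, k+1) * B $$ (k+1, k+1)"
  using upper_triangular_mult_index[OF assms(1-4), of k "k+1"] assms(5)
  by (simp add: atLeastAtMostSuc_conv)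

lemma intertwined_strictly_upper_triangular_superdiag_nonzero_iff:
  fixes D1 D2 g :: "'a::field mat"
  assumes D1: "D1 \<in> carrier_mat n n" "strictly_upper_triangular D1"
    and D2: "D2 \<in> carrier_mat n n" "strictly_upper_triangular D2"
    and g: "g \<in> carrier_mat n n" "upper_triangular g"
    and g_diag: "\<And>i. i < n \<Longrightarrow> g $$ (i,i) \<noteq> 0"
    and intertwined: "D2 * g = g * D1"
    and k: "k + 1 < n"
  shows "D2 $$ (k, k+1) \<noteq> 0 \<longleftrightarrow> D1 $$ (k, k+1) \<noteq> 0"
proof -
  have "D2 $$ (k, k+1) * g $$ (k+1, k+1) = (D2 * g) $$ (k, k+1)"
    using upper_triangular_mult_superdiag[OF D2(1) g(1)
        strictly_upper_triangular_imp_upper_triangular[OF D2(2)] g(2) k]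
      strictly_upper_triangular_diag[OF D2(2)] D2(1) k by simp
  also have "\<dots> = g $$ (k,k) * D1 $$ (k, k+1)"
    using upper_triangular_mult_superdiag[OF g(1) D1(1) g(2)
        strictly_upper_triangular_imp_upper_triangular[OF D1(2)] k]
      strictly_upper_triangular_diag[OF D1(2)] D1(1) k intertwined by simp
  finally show ?thesis
    using g_diag[of k] g_diag[of "k+1"] k by auto
qed

theorem lemma2p1:
  fixes N :: nat and deg :: "nat \<Rightarrow> int" and B :: "nat set"
    and D1 D2 :: "'k::field mat"
  assumes "B \<subseteq> {0..<N}"
    and "MAB_differential N deg B D1"
    and "MAB_differential N deg B D2"
    and "AB_equivalent N deg B D1 D2"
  shows "trivial_elems N B D1 = trivial_elems N B D2"
proof -
  obtain g h where g: "g \<in> AutT N deg B" and h: "h \<in> carrier_mat N N"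
    and gh: "g * h = 1\<^sub>m N" and hg: "h * g = 1\<^sub>m N" and D2: "D2 = g * D1 * h"
    using assms(4) unfolding AB_equivalent_def by blast
  have D: "M_differential N deg D1" "M_differential N deg D2"
    using assms(2,3) unfolding MAB_differential_def by auto
  then have D_carrier: "D1 \<in> carrier_mat N N" "D2 \<in> carrier_mat N N"
    unfolding M_differential_def by auto
  have gc: "g \<in> carrier_mat N N"
    and flag: "\<forall>i\<le>N. (\<lambda>v. g *\<^sub>v v) ` flag_sub N i \<subseteq> flag_sub N i"
    using g unfolding AutT_def by auto
  have ut: "upper_triangular g"
    using flag_preserving_imp_upper_triangular[OF gc flag] .
  have "D2 * g = (g * D1) * (h * g)"
    using D2 gc h D_carrier by (simp add: assoc_mult_mat[of _ N N _ N _ N])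
  then have intertwined: "D2 * g = g * D1"
    using hg gc D_carrier by simp
  have "D2 $$ (k, k+1) \<noteq> 0 \<longleftrightarrow> D1 $$ (k, k+1) \<noteq> 0" if "k + 1 < N" for k
    using intertwined_strictly_upper_triangular_superdiag_nonzero_iff[OF
        D_carrier(1) M_differential_strictly_upper_triangular[OF D(1)]
        D_carrier(2) M_differential_strictly_upper_triangular[OF D(2)]
        gc ut _ intertwined that]
      upper_triangular_right_invertible_diag_nonzero[OF gc h gh ut] by blast
  then show ?thesis
    unfolding trivial_elems_def by blast
qed

end
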